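(* Let $\mathbb{A}$ be a non-empty set and $\varphi:\mathbb{A}^+\to C$ a finite coloring. Then every periodic word $x=u^\omega$ with $u\in\mathbb{A}^+$ admits a shift invariant $\varphi$-ultra monochromatic factorization.
   Context: $T$ is the shift, $T(x_0x_1\cdots)=x_1x_2\cdots$. A factorization $z=V_0V_1V_2\cdots$ with all $V_i\in\mathbb{A}^+$ is $\varphi$-ultra monochromatic if there is $c\in C$ such that for all $k\ge1$, all $0\le n_1<\cdots<n_k$ and all permutations $\sigma$ of $\{1,\dots,k\}$, $\varphi(V_{n_{\sigma(1)}}\cdots V_{n_{\sigma(k)}})=c$. It is shift invariant if for every positive integer $j$ the induced factorization $T^j(z)=W_0W_1W_2\cdots$ with $|W_i|=|V_i|$ for all $i$ is also $\varphi$-ultra monochromatic (the color may depend on $j$). *)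

theory Defs
  imports Main "HOL-Library.Multiset"
begin

text \<open>Infinite words are functions nat => 'a; finite words are lists.
  A^+ is the set of nonempty lists with letters in A.\<close>

definition plus_words :: "'a set \<Rightarrow> 'a list set" where
  "plus_words A = {w. w \<noteq> [] \<and> set w \<subseteq> A}"

definition shift :: "nat \<Rightarrow> (nat \<Rightarrow> 'a) \<Rightarrow> (nat \<Rightarrow> 'a)" where
  "shift j z = (\<lambda>n. z (n + j))"

definition omega_pow :: "'a list \<Rightarrow> (nat \<Rightarrow> 'a)" where
  "omega_pow u = (\<lambda>n. u ! (n mod length u))"

definition starts :: "(nat \<Rightarrow> 'a list) \<Rightarrow> nat \<Rightarrow> nat" where
  "starts V i = (\<Sum>m<i. length (V m))"

definition is_factorization :: "'a set \<Rightarrow> (nat \<Rightarrow> 'a) \<Rightarrow> (nat \<Rightarrow> 'a list) \<Rightarrow> bool" where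
  "is_factorization A z V \<longleftrightarrow>
     (\<forall>i. V i \<in> plus_words A) \<and>
     (\<forall>i k. k < length (V i) \<longrightarrow> z (starts V i + k) = V i ! k)"

text \<open>phi-ultra monochromatic: a colour c in C such that for all k >= 1, all
  n_1 < ... < n_k and all permutations, phi(V_{n_sigma(1)} ... V_{n_sigma(k)}) = c.
  Here ns = [n_1,...,n_k] and the permuted index lists are the lists ms with mset ms = mset ns.\<close>
definition ultra_mono :: "('a list \<Rightarrow> 'c) \<Rightarrow> 'c set \<Rightarrow> (nat \<Rightarrow> 'a list) \<Rightarrow> bool" where
  "ultra_mono \<phi> C V \<longleftrightarrow>
     (\<exists>c\<in>C. \<forall>ns. ns \<noteq> [] \<longrightarrow> sorted_wrt (<) ns \<longrightarrow>
        (\<forall>ms. mset ms = mset ns \<longrightarrow> \<phi> (concat (map V ms)) = c))"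

definition induced_fact :: "(nat \<Rightarrow> 'a list) \<Rightarrow> nat \<Rightarrow> (nat \<Rightarrow> 'a) \<Rightarrow> (nat \<Rightarrow> 'a list)" where
  "induced_fact V j z = (\<lambda>i. map (\<lambda>k. shift j z (starts V i + k)) [0..<length (V i)])"

definition shift_invariant :: "('a list \<Rightarrow> 'c) \<Rightarrow> 'c set \<Rightarrow> (nat \<Rightarrow> 'a) \<Rightarrow> (nat \<Rightarrow> 'a list) \<Rightarrow> bool" where
  "shift_invariant \<phi> C z V \<longleftrightarrow> (\<forall>j\<ge>1. ultra_mono \<phi> C (induced_fact V j z))"

end

theory Submission
  imports Defs
begin

text \<open>Colour every exponent \<open>n\<close> by the tuple of colours \<open>\<phi>((rotate r u)\<^sup>n)\<close>, \<open>r < |u|\<close>;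
  there are only finitely many colours. Hindman's theorem gives exponents \<open>x\<^sub>i \<ge> 1\<close> all of whose
  finite sums have the same colour, and we take \<open>V\<^sub>i = u\<^bsup>x\<^sub>i\<^esup>\<close>. A product of distinct blocks in any order
  is \<open>u\<close> raised to the sum of their exponents, and shifting \<open>u\<^sup>\<omega>\<close> by \<open>j\<close> turns every block into
  \<open>(rotate j u)\<^bsup>x\<^sub>i\<^esup>\<close>, so all induced factorizations are ultra monochromatic.

  Hindman's theorem is proved following Galvin and Glazer: by the Ellis-Numakura lemma the
  compact semigroup of free ultrafilters on \<open>\<nat>\<close> contains an idempotent \<open>p = p + p\<close>, and every
  member of \<open>p\<close> contains all finite sums of some sequence.\<close>

section \<open>Ultrafilters\<close>

definition ultrafilter :: "'a set set \<Rightarrow> bool" where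
  "ultrafilter U \<longleftrightarrow> UNIV \<in> U \<and> {} \<notin> U \<and> (\<forall>A B. A \<in> U \<longrightarrow> A \<subseteq> B \<longrightarrow> B \<in> U)
     \<and> (\<forall>A B. A \<in> U \<longrightarrow> B \<in> U \<longrightarrow> A \<inter> B \<in> U) \<and> (\<forall>A. A \<in> U \<or> - A \<in> U)"

definition finite_intersection_property :: "'a set set \<Rightarrow> bool" where
  "finite_intersection_property G \<longleftrightarrow> (\<forall>H. finite H \<longrightarrow> H \<subseteq> G \<longrightarrow> \<Inter>H \<noteq> {})"

lemma ultrafilterD:
  assumes "ultrafilter U"
  shows ultrafilter_UNIV: "UNIV \<in> U"
    and ultrafilter_empty: "{} \<notin> U"
    and ultrafilter_mono: "A \<in> U \<Longrightarrow> A \<subseteq> B \<Longrightarrow> B \<in> U"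
    and ultrafilter_Int: "A \<in> U \<Longrightarrow> B \<in> U \<Longrightarrow> A \<inter> B \<in> U"
    and ultrafilter_or_Compl: "A \<in> U \<or> - A \<in> U"
  using assms unfolding ultrafilter_def by blast+

lemma ultrafilter_Compl_iff:
  assumes "ultrafilter U"
  shows "- A \<in> U \<longleftrightarrow> A \<notin> U"
proof
  assume "- A \<in> U"
  then show "A \<notin> U"
    using ultrafilter_Int[OF assms, of A "- A"] ultrafilter_empty[OF assms] by auto
qed (use ultrafilter_or_Compl[OF assms] in blast)

lemma ultrafilter_Int_iff: "ultrafilter U \<Longrightarrow> A \<inter> B \<in> U \<longleftrightarrow> A \<in> U \<and> B \<in> U"
  using ultrafilterD[of U] by (meson Int_lower1 Int_lower2)

lemma ultrafilter_Inter:
  assumes "ultrafilter U" "finite H" "H \<subseteq> U"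
  shows "\<Inter>H \<in> U"
  using assms(2,3)
proof (induction H rule: finite_induct)
  case empty
  show ?case using ultrafilter_UNIV[OF assms(1)] by simp
next
  case (insert A H)
  then show ?case using ultrafilter_Int[OF assms(1)] by simp
qed

lemma ultrafilter_nonempty_Inter:
  "ultrafilter U \<Longrightarrow> finite H \<Longrightarrow> H \<subseteq> U \<Longrightarrow> \<Inter>H \<noteq> {}"
  using ultrafilter_Inter ultrafilter_empty by fastforce

lemma ultrafilter_finite_cover:
  assumes "ultrafilter U" "finite V" "\<Union>V = UNIV"
  shows "\<exists>A\<in>V. A \<in> U"
proof (rule ccontr)
  assume "\<not> (\<exists>A\<in>V. A \<in> U)"
  then have "uminus ` V \<subseteq> U"
    using ultrafilter_Compl_iff[OF assms(1)] by blast
  moreover have "finite (uminus ` V)"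
    using assms(2) by simp
  moreover have "\<Inter>(uminus ` V) = {}"
    using assms(3) by blast
  ultimately show False
    using ultrafilter_nonempty_Inter[OF assms(1)] by metis
qed

lemma ultrafilter_subset_imp_eq:
  assumes "ultrafilter U" "ultrafilter V" "U \<subseteq> V"
  shows "U = V"
proof (rule subset_antisym[OF assms(3)], rule subsetI)
  fix A assume "A \<in> V"
  then have "- A \<notin> U"
    using assms(3) ultrafilter_Compl_iff[OF assms(2), of A] by blast
  then show "A \<in> U"
    using ultrafilter_Compl_iff[OF assms(1)] by blast
qed

lemma finite_intersection_property_insert:
  "finite_intersection_property (insert B G) \<longleftrightarrow>
     (\<forall>H. finite H \<longrightarrow> H \<subseteq> G \<longrightarrow> B \<inter> \<Inter>H \<noteq> {})"
  unfolding finite_intersection_property_def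
proof (intro iffI allI impI)
  fix H
  assume fip: "\<forall>H. finite H \<longrightarrow> H \<subseteq> insert B G \<longrightarrow> \<Inter>H \<noteq> {}"
    and H: "finite H" "H \<subseteq> G"
  have "\<Inter>(insert B H) \<noteq> {}"
    using fip[rule_format, of "insert B H"] H by blast
  then show "B \<inter> \<Inter>H \<noteq> {}"
    by simp
next
  fix H
  assume fip: "\<forall>H. finite H \<longrightarrow> H \<subseteq> G \<longrightarrow> B \<inter> \<Inter>H \<noteq> {}"
    and H: "finite H" "H \<subseteq> insert B G"
  have "B \<inter> \<Inter>(H - {B}) \<noteq> {}"
    using fip[rule_format, of "H - {B}"] H by blast
  moreover have "B \<inter> \<Inter>(H - {B}) \<subseteq> \<Inter>H"
    by blast
  ultimately show "\<Inter>H \<noteq> {}"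
    by blast
qed

lemma maximal_finite_intersection_property_imp_ultrafilter:
  assumes fip: "finite_intersection_property G"
    and maximal: "\<And>X. finite_intersection_property X \<Longrightarrow> G \<subseteq> X \<Longrightarrow> X = G"
  shows "ultrafilter G"
proof -
  have member: "B \<in> G \<or> (\<exists>H. finite H \<and> H \<subseteq> G \<and> B \<inter> \<Inter>H = {})" for B
    using maximal[of "insert B G"] unfolding finite_intersection_property_insert by blast
  have nonempty: "\<Inter>H \<noteq> {}" if "finite H" "H \<subseteq> G" for H
    using fip that unfolding finite_intersection_property_def by blast
  have "UNIV \<in> G"
    using member[of UNIV] nonempty by (metis inf_top_left)
  moreover have "{} \<notin> G"
    using nonempty[of "{{}}"] by blast
  moreover have "B \<in> G" if "A \<in> G" "A \<subseteq> B" for A B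
  proof -
    have "B \<inter> \<Inter>H \<noteq> {}" if "finite H" "H \<subseteq> G" for H
    proof -
      have "\<Inter>(insert A H) \<noteq> {}"
        using nonempty[of "insert A H"] that \<open>A \<in> G\<close> by simp
      then show ?thesis
        using \<open>A \<subseteq> B\<close> by auto
    qed
    then show ?thesis
      using member[of B] by blast
  qed
  moreover have "A \<inter> B \<in> G" if "A \<in> G" "B \<in> G" for A B
  proof -
    have "A \<inter> B \<inter> \<Inter>H \<noteq> {}" if "finite H" "H \<subseteq> G" for H
    proof -
      have "\<Inter>(insert A (insert B H)) \<noteq> {}"
        using nonempty[of "insert A (insert B H)"] that \<open>A \<in> G\<close> \<open>B \<in> G\<close> by simp
      then show ?thesis
        by (simp add: inf_assoc)
    qed
    then show ?thesis
      using member[of "A \<inter> B"] by blast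
  qed
  moreover have "A \<in> G \<or> - A \<in> G" for A
  proof (rule ccontr)
    assume "\<not> (A \<in> G \<or> - A \<in> G)"
    then obtain H1 H2 where "finite H1" "H1 \<subseteq> G" "A \<inter> \<Inter>H1 = {}"
      and "finite H2" "H2 \<subseteq> G" "- A \<inter> \<Inter>H2 = {}"
      using member[of A] member[of "- A"] by blast
    then have "\<Inter>(H1 \<union> H2) = {}"
      by blast
    then show False
      using nonempty[of "H1 \<union> H2"] \<open>finite H1\<close> \<open>finite H2\<close> \<open>H1 \<subseteq> G\<close> \<open>H2 \<subseteq> G\<close> by simp
  qed
  ultimately show ?thesis
    unfolding ultrafilter_def by blast
qed

theorem ultrafilter_extends_finite_intersection_property:
  assumes "finite_intersection_property F"
  obtains U where "ultrafilter U" "F \<subseteq> U"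
proof -
  let ?A = "{G. F \<subseteq> G \<and> finite_intersection_property G}"
  have "\<exists>U\<in>?A. \<forall>X\<in>C. X \<subseteq> U" if C: "C \<in> chains ?A" for C
  proof (cases "C = {}")
    case True
    then show ?thesis using assms by auto
  next
    case False
    have chain: "subset.chain ?A C"
      using C unfolding chains_alt_def by auto
    have "finite_intersection_property (\<Union>C)"
      unfolding finite_intersection_property_def
    proof (intro allI impI)
      fix H assume "finite H" "H \<subseteq> \<Union>C"
      then obtain B where "B \<in> C" "H \<subseteq> B"
        using finite_subset_Union_chain[OF _ _ False chain] by metis
      then show "\<Inter>H \<noteq> {}"
        using C \<open>finite H\<close> unfolding chains_def finite_intersection_property_def by auto
    qed
    moreover have "F \<subseteq> \<Union>C"
      using False C unfolding chains_def by auto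
    ultimately show ?thesis by auto
  qed
  then obtain M where "M \<in> ?A" "\<forall>X\<in>?A. M \<subseteq> X \<longrightarrow> X = M"
    using Zorn_Lemma2[of ?A] by blast
  then have "ultrafilter M"
    by (intro maximal_finite_intersection_property_imp_ultrafilter) auto
  with \<open>M \<in> ?A\<close> show thesis
    using that by blast
qed

section \<open>The compact space of ultrafilters\<close>

text \<open>Closed sets of the Stone space: \<open>K\<close> contains every ultrafilter \<open>r\<close> all of whose basic
  neighbourhoods \<open>{q. A \<in> q}\<close>, \<open>A \<in> r\<close>, meet \<open>K\<close>.\<close>

definition stone_closed :: "'a set set set \<Rightarrow> bool" where
  "stone_closed K \<longleftrightarrow> (\<forall>q\<in>K. ultrafilter q) \<and>
     (\<forall>r. ultrafilter r \<longrightarrow> (\<forall>A\<in>r. \<exists>q\<in>K. A \<in> q) \<longrightarrow> r \<in> K)"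

lemma stone_closedD:
  assumes "stone_closed K"
  shows stone_closed_ultrafilter: "q \<in> K \<Longrightarrow> ultrafilter q"
    and stone_closed_adherent: "ultrafilter r \<Longrightarrow> (\<And>A. A \<in> r \<Longrightarrow> \<exists>q\<in>K. A \<in> q) \<Longrightarrow> r \<in> K"
  using assms unfolding stone_closed_def by blast+

lemma stone_closed_Inter:
  assumes "\<And>K. K \<in> CC \<Longrightarrow> stone_closed K" "CC \<noteq> {}"
  shows "stone_closed (\<Inter>CC)"
  unfolding stone_closed_def
proof (intro conjI allI impI ballI)
  fix q assume "q \<in> \<Inter>CC"
  obtain K where "K \<in> CC"
    using assms(2) by blast
  with \<open>q \<in> \<Inter>CC\<close> show "ultrafilter q"
    using stone_closed_ultrafilter[OF assms(1)] by blast
next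
  fix r assume r: "ultrafilter r" "\<forall>A\<in>r. \<exists>q\<in>\<Inter>CC. A \<in> q"
  show "r \<in> \<Inter>CC"
  proof
    fix K assume "K \<in> CC"
    show "r \<in> K"
      by (rule stone_closed_adherent[OF assms(1)[OF \<open>K \<in> CC\<close>] r(1)])
        (use r(2) \<open>K \<in> CC\<close> in blast)
  qed
qed

lemma stone_closed_Collect_mem:
  assumes "stone_closed M"
  shows "stone_closed {q\<in>M. B \<in> q}"
  unfolding stone_closed_def
proof (intro conjI allI impI ballI)
  fix q assume "q \<in> {q\<in>M. B \<in> q}"
  then show "ultrafilter q"
    using stone_closed_ultrafilter[OF assms] by blast
next
  fix r assume r: "ultrafilter r" "\<forall>A\<in>r. \<exists>q\<in>{q\<in>M. B \<in> q}. A \<in> q"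
  have "r \<in> M"
    by (rule stone_closed_adherent[OF assms r(1)]) (use r(2) in blast)
  moreover have "B \<in> r"
  proof (rule ccontr)
    assume "B \<notin> r"
    then have "- B \<in> r"
      using ultrafilter_Compl_iff[OF r(1)] by blast
    then obtain q where "q \<in> M" "B \<in> q" "- B \<in> q"
      using r(2) by blast
    then show False
      using ultrafilter_Compl_iff[OF stone_closed_ultrafilter[OF assms]] by blast
  qed
  ultimately show "r \<in> {q\<in>M. B \<in> q}"
    by simp
qed

text \<open>The sets belonging to all points of some \<open>K \<in> KK\<close> have the finite intersection property, and
  an ultrafilter extending them is adherent to every \<open>K\<close>.\<close>

theorem stone_compact:
  assumes closed: "\<And>K. K \<in> KK \<Longrightarrow> stone_closed K"
    and fip: "\<And>GG. finite GG \<Longrightarrow> GG \<subseteq> KK \<Longrightarrow> GG \<noteq> {} \<Longrightarrow> \<Inter>GG \<noteq> {}"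
  obtains U where "ultrafilter U" "\<And>K. K \<in> KK \<Longrightarrow> U \<in> K"
proof -
  define F where "F = {A. \<exists>K\<in>KK. \<forall>q\<in>K. A \<in> q}"
  have "finite_intersection_property F"
    unfolding finite_intersection_property_def
  proof (intro allI impI)
    fix H assume H: "finite H" "H \<subseteq> F"
    show "\<Inter>H \<noteq> {}"
    proof (cases "H = {}")
      case False
      have "\<forall>A\<in>H. \<exists>K. K \<in> KK \<and> (\<forall>q\<in>K. A \<in> q)"
        using H(2) unfolding F_def by blast
      then obtain k where "\<forall>A\<in>H. k A \<in> KK \<and> (\<forall>q\<in>k A. A \<in> q)"
        by (rule bchoice[THEN exE])
      then have k: "\<And>A. A \<in> H \<Longrightarrow> k A \<in> KK" "\<And>A q. A \<in> H \<Longrightarrow> q \<in> k A \<Longrightarrow> A \<in> q"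
        by blast+
      have "\<Inter>(k ` H) \<noteq> {}"
        using k(1) H(1) False by (intro fip) auto
      then obtain q where q: "\<And>A. A \<in> H \<Longrightarrow> q \<in> k A"
        by auto
      obtain A0 where "A0 \<in> H"
        using False by auto
      then have "ultrafilter q"
        using stone_closed_ultrafilter[OF closed[OF k(1)] q] by blast
      moreover have "H \<subseteq> q"
        using q k(2) by blast
      ultimately show ?thesis
        using ultrafilter_nonempty_Inter H(1) by blast
    qed simp
  qed
  then obtain U where U: "ultrafilter U" "F \<subseteq> U"
    by (rule ultrafilter_extends_finite_intersection_property)
  have "U \<in> K" if "K \<in> KK" for K
  proof (rule stone_closed_adherent[OF closed[OF that] U(1)])
    fix A assume "A \<in> U"
    show "\<exists>q\<in>K. A \<in> q"
    proof (rule ccontr)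
      assume "\<not> (\<exists>q\<in>K. A \<in> q)"
      then have "\<forall>q\<in>K. - A \<in> q"
        using ultrafilter_Compl_iff stone_closed_ultrafilter[OF closed[OF that]] by blast
      then have "- A \<in> F"
        unfolding F_def using that by blast
      then show False
        using U \<open>A \<in> U\<close> ultrafilter_Compl_iff[OF U(1)] by blast
    qed
  qed
  then show thesis
    using U(1) that by blast
qed

section \<open>The semigroup \<open>\<beta>\<nat>\<close>\<close>

text \<open>\<open>ultra_plus q p\<close> is the sum \<open>q + p\<close> in the Stone-Cech compactification of \<open>\<nat>\<close>:
  \<open>A \<in> q + p\<close> iff \<open>A - n \<in> p\<close> for \<open>q\<close>-almost all \<open>n\<close>.\<close>

definition set_shift :: "nat set \<Rightarrow> nat \<Rightarrow> nat set" where
  "set_shift A n = {m. m + n \<in> A}"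

definition ultra_plus :: "nat set set \<Rightarrow> nat set set \<Rightarrow> nat set set" where
  "ultra_plus q p = {A. {n. set_shift A n \<in> p} \<in> q}"

lemma set_shift_set_shift: "set_shift (set_shift A m) n = set_shift A (n + m)"
  by (simp add: set_shift_def add.assoc)

lemma mem_ultra_plus: "A \<in> ultra_plus q p \<longleftrightarrow> {n. set_shift A n \<in> p} \<in> q"
  by (simp add: ultra_plus_def)

lemma ultrafilter_ultra_plus:
  assumes q: "ultrafilter q" and p: "ultrafilter p"
  shows "ultrafilter (ultra_plus q p)"
proof -
  have Compl: "{n. set_shift (- A) n \<in> p} = - {n. set_shift A n \<in> p}" for A
  proof -
    have "set_shift (- A) n = - set_shift A n" for n
      by (auto simp: set_shift_def)
    then show ?thesis
      using ultrafilter_Compl_iff[OF p] by auto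
  qed
  have Int: "{n. set_shift (A \<inter> B) n \<in> p} = {n. set_shift A n \<in> p} \<inter> {n. set_shift B n \<in> p}" for A B
  proof -
    have "set_shift (A \<inter> B) n = set_shift A n \<inter> set_shift B n" for n
      by (auto simp: set_shift_def)
    then show ?thesis
      using ultrafilter_Int_iff[OF p] by auto
  qed
  have mono: "{n. set_shift A n \<in> p} \<subseteq> {n. set_shift B n \<in> p}" if "A \<subseteq> B" for A B
  proof -
    have "set_shift A n \<subseteq> set_shift B n" for n
      using that by (auto simp: set_shift_def)
    then show ?thesis
      using ultrafilter_mono[OF p] by blast
  qed
  show ?thesis
    unfolding ultrafilter_def mem_ultra_plus
  proof (intro conjI allI impI)
    show "{n. set_shift UNIV n \<in> p} \<in> q" "{n. set_shift {} n \<in> p} \<notin> q"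
      by (simp_all add: set_shift_def ultrafilter_UNIV[OF p] ultrafilter_empty[OF p] ultrafilter_UNIV[OF q] ultrafilter_empty[OF q])
    fix A B
    show "{n. set_shift B n \<in> p} \<in> q" if "{n. set_shift A n \<in> p} \<in> q" "A \<subseteq> B"
      using ultrafilter_mono[OF q that(1) mono[OF that(2)]] .
    show "{n. set_shift (A \<inter> B) n \<in> p} \<in> q" if "{n. set_shift A n \<in> p} \<in> q" "{n. set_shift B n \<in> p} \<in> q"
      unfolding Int using ultrafilter_Int[OF q that] .
    show "{n. set_shift A n \<in> p} \<in> q \<or> {n. set_shift (- A) n \<in> p} \<in> q"
      unfolding Compl using ultrafilter_or_Compl[OF q] .
  qed
qed

lemma ultra_plus_assoc: "ultra_plus (ultra_plus r q) p = ultra_plus r (ultra_plus q p)"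
  unfolding ultra_plus_def by (simp add: set_shift_def add.assoc)

definition free_ultrafilters :: "nat set set set" where
  "free_ultrafilters = {p. ultrafilter p \<and> (\<forall>n. {n..} \<in> p)}"

definition plus_closed :: "nat set set set \<Rightarrow> bool" where
  "plus_closed K \<longleftrightarrow> (\<forall>q\<in>K. \<forall>p\<in>K. ultra_plus q p \<in> K)"

lemma stone_closed_free_ultrafilters: "stone_closed free_ultrafilters"
  unfolding stone_closed_def
proof (intro conjI allI impI ballI)
  fix r assume r: "ultrafilter r" "\<forall>A\<in>r. \<exists>q\<in>free_ultrafilters. A \<in> q"
  have "{n..} \<in> r" for n
  proof (rule ccontr)
    assume "{n..} \<notin> r"
    then obtain q where "q \<in> free_ultrafilters" "- {n..} \<in> q"
      using r ultrafilter_Compl_iff[OF r(1)] by blast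
    then show False
      unfolding free_ultrafilters_def using ultrafilter_Compl_iff by blast
  qed
  then show "r \<in> free_ultrafilters"
    using r(1) unfolding free_ultrafilters_def by simp
qed (simp add: free_ultrafilters_def)

lemma plus_closed_free_ultrafilters: "plus_closed free_ultrafilters"
  unfolding plus_closed_def
proof (intro ballI)
  fix q p assume "q \<in> free_ultrafilters" "p \<in> free_ultrafilters"
  then have qp: "ultrafilter q" "ultrafilter p" "\<And>n. {n..} \<in> q" "\<And>n. {n..} \<in> p"
    unfolding free_ultrafilters_def by auto
  have "{n..} \<in> ultra_plus q p" for n
  proof -
    have "{n..} \<subseteq> set_shift {n..} k" for k
      by (auto simp: set_shift_def)
    then have "{k. set_shift {n..} k \<in> p} = UNIV"
      using ultrafilter_mono[OF qp(2) qp(4)] by blast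
    then show ?thesis
      unfolding mem_ultra_plus using ultrafilter_UNIV[OF qp(1)] by simp
  qed
  then show "ultra_plus q p \<in> free_ultrafilters"
    unfolding free_ultrafilters_def using ultrafilter_ultra_plus[OF qp(1,2)] by simp
qed

lemma free_ultrafilters_nonempty: "free_ultrafilters \<noteq> {}"
proof -
  have "finite_intersection_property (range atLeast :: nat set set)"
    unfolding finite_intersection_property_def
  proof (intro allI impI)
    fix H :: "nat set set" assume "finite H" "H \<subseteq> range atLeast"
    then obtain N where N: "finite N" "H = atLeast ` N"
      by (meson finite_subset_image)
    have "\<Sum>N \<in> \<Inter>H"
      using N member_le_sum[of _ N id] by auto
    then show "\<Inter>H \<noteq> {}"
      by blast
  qed
  then obtain U where "ultrafilter U" "range (atLeast :: nat \<Rightarrow> nat set) \<subseteq> U"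
    by (rule ultrafilter_extends_finite_intersection_property)
  then have "U \<in> free_ultrafilters"
    unfolding free_ultrafilters_def by auto
  then show ?thesis
    by blast
qed

section \<open>Idempotent ultrafilters\<close>

lemma Zorn_minimal_Inter:
  assumes "A \<noteq> {}" and chain: "\<And>C. C \<noteq> {} \<Longrightarrow> subset.chain A C \<Longrightarrow> \<Inter>C \<in> A"
  shows "\<exists>M\<in>A. \<forall>X\<in>A. X \<subseteq> M \<longrightarrow> X = M"
proof -
  have "\<exists>M'\<in>uminus ` A. \<forall>X\<in>uminus ` A. M' \<subseteq> X \<longrightarrow> X = M'"
  proof (rule subset_Zorn_nonempty)
    show "uminus ` A \<noteq> {}"
      using assms(1) by blast
  next
    fix C assume C: "C \<noteq> {}" "subset.chain (uminus ` A) C"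
    have "uminus ` C \<subseteq> A"
      using C(2) unfolding subset_chain_def by auto
    moreover have "X \<subseteq> Y \<or> Y \<subseteq> X" if XY: "X \<in> uminus ` C" "Y \<in> uminus ` C" for X Y
    proof -
      obtain X' Y' where "X' \<in> C" "Y' \<in> C" "X = - X'" "Y = - Y'"
        using XY by blast
      then show ?thesis
        using C(2) unfolding subset_chain_def by (metis Compl_subset_Compl_iff)
    qed
    ultimately have "subset.chain A (uminus ` C)"
      unfolding subset_chain_def by blast
    then have "\<Inter>(uminus ` C) \<in> A"
      using C(1) by (intro chain) simp_all
    moreover have "\<Union>C = - \<Inter>(uminus ` C)"
      by auto
    ultimately show "\<Union>C \<in> uminus ` A"
      by (metis image_eqI)
  qed
  then obtain M where M: "M \<in> A" and maximal: "\<forall>X\<in>uminus ` A. - M \<subseteq> X \<longrightarrow> X = - M"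
    by blast
  have "X = M" if "X \<in> A" "X \<subseteq> M" for X
    using maximal[rule_format, of "- X"] that by simp
  then show ?thesis
    using M by blast
qed

definition closed_free_semigroup :: "nat set set set \<Rightarrow> bool" where
  "closed_free_semigroup K \<longleftrightarrow>
     stone_closed K \<and> K \<noteq> {} \<and> K \<subseteq> free_ultrafilters \<and> plus_closed K"

lemma minimal_closed_free_semigroup:
  obtains M where "closed_free_semigroup M"
    "\<And>K. closed_free_semigroup K \<Longrightarrow> K \<subseteq> M \<Longrightarrow> K = M"
proof -
  have "\<exists>M\<in>Collect closed_free_semigroup. \<forall>K\<in>Collect closed_free_semigroup. K \<subseteq> M \<longrightarrow> K = M"
  proof (rule Zorn_minimal_Inter)
    show "Collect closed_free_semigroup \<noteq> {}"
      using stone_closed_free_ultrafilters free_ultrafilters_nonempty plus_closed_free_ultrafilters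
      unfolding closed_free_semigroup_def by blast
  next
    fix D assume D: "D \<noteq> {}" "subset.chain (Collect closed_free_semigroup) D"
    have members: "stone_closed K" "K \<noteq> {}" "K \<subseteq> free_ultrafilters" "plus_closed K" if "K \<in> D" for K
      using that D(2) unfolding subset_chain_def closed_free_semigroup_def by auto
    have "\<Inter>GG \<noteq> {}" if "finite GG" "GG \<subseteq> D" "GG \<noteq> {}" for GG
    proof -
      have "subset.chain (Collect closed_free_semigroup) GG"
        using D(2) that(2) unfolding subset_chain_def by blast
      then have "\<Inter>GG \<in> GG"
        using Inter_in_chain[OF that(1,3)] by blast
      then show ?thesis
        using members(2) that(2) by blast
    qed
    then obtain U where "\<And>K. K \<in> D \<Longrightarrow> U \<in> K"
      using stone_compact[of D] members(1) by metis
    then have "\<Inter>D \<noteq> {}"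
      by blast
    moreover have "\<Inter>D \<subseteq> free_ultrafilters"
      using D(1) members(3) by blast
    moreover have "plus_closed (\<Inter>D)"
      using members(4) unfolding plus_closed_def by blast
    moreover have "stone_closed (\<Inter>D)"
      using stone_closed_Inter[OF members(1) D(1)] .
    ultimately show "\<Inter>D \<in> Collect closed_free_semigroup"
      unfolding closed_free_semigroup_def by blast
  qed
  then show thesis
    using that by blast
qed

text \<open>Right translation \<open>q \<mapsto> q + p\<close> is continuous, so by compactness it maps closed sets to closed sets.\<close>

lemma stone_closed_right_translate:
  assumes M: "stone_closed M" and p: "ultrafilter p"
  shows "stone_closed ((\<lambda>q. ultra_plus q p) ` M)"
  unfolding stone_closed_def
proof (intro conjI allI impI ballI)
  fix r assume "r \<in> (\<lambda>q. ultra_plus q p) ` M"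
  then obtain q where "q \<in> M" "r = ultra_plus q p"
    by blast
  then show "ultrafilter r"
    using ultrafilter_ultra_plus[OF stone_closed_ultrafilter[OF M] p] by blast
next
  fix r assume r: "ultrafilter r" "\<forall>A\<in>r. \<exists>q\<in>(\<lambda>q. ultra_plus q p) ` M. A \<in> q"
  define S where "S A = {q\<in>M. {n. set_shift A n \<in> p} \<in> q}" for A
  have S_fip: "\<Inter>(S ` As) \<noteq> {}" if As: "finite As" "As \<subseteq> r" for As
  proof -
    obtain q where q: "q \<in> M" "\<Inter>As \<in> ultra_plus q p"
      using r(2) ultrafilter_Inter[OF r(1) As] by blast
    have "q \<in> S A" if "A \<in> As" for A
    proof -
      have "A \<in> ultra_plus q p"
        using ultrafilter_mono[OF ultrafilter_ultra_plus[OF stone_closed_ultrafilter[OF M q(1)] p] q(2)]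
          that by blast
      then show ?thesis
        unfolding S_def mem_ultra_plus using q(1) by blast
    qed
    then show ?thesis
      by blast
  qed
  obtain U where "ultrafilter U" and U: "\<And>K. K \<in> S ` r \<Longrightarrow> U \<in> K"
  proof (rule stone_compact)
    show "stone_closed K" if "K \<in> S ` r" for K
      using that stone_closed_Collect_mem[OF M] unfolding S_def by blast
  next
    fix GG assume GG: "finite GG" "GG \<subseteq> S ` r" "GG \<noteq> {}"
    then obtain As where "As \<subseteq> r" "finite As" "GG = S ` As"
      by (meson finite_subset_image)
    then show "\<Inter>GG \<noteq> {}"
      using S_fip[of As] by simp
  qed (rule that)
  have U_S: "U \<in> S A" if "A \<in> r" for A
    using U that by blast
  then have "U \<in> M"
    using ultrafilter_UNIV[OF r(1)] unfolding S_def by blast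
  have "r \<subseteq> ultra_plus U p"
    using U_S unfolding S_def by (auto simp: mem_ultra_plus)
  then have "r = ultra_plus U p"
    by (rule ultrafilter_subset_imp_eq[OF r(1) ultrafilter_ultra_plus[OF stone_closed_ultrafilter[OF M \<open>U \<in> M\<close>] p]])
  then show "r \<in> (\<lambda>q. ultra_plus q p) ` M"
    using \<open>U \<in> M\<close> by blast
qed

lemma stone_closed_right_stabilizer:
  assumes M: "stone_closed M" and p: "ultrafilter p"
  shows "stone_closed {q\<in>M. ultra_plus q p = p}"
  unfolding stone_closed_def
proof (intro conjI allI impI ballI)
  fix q assume "q \<in> {q\<in>M. ultra_plus q p = p}"
  then show "ultrafilter q"
    using stone_closed_ultrafilter[OF M] by blast
next
  fix r assume r: "ultrafilter r" "\<forall>A\<in>r. \<exists>q\<in>{q\<in>M. ultra_plus q p = p}. A \<in> q"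
  have "r \<in> M"
    by (rule stone_closed_adherent[OF M r(1)]) (use r(2) in blast)
  have "p \<subseteq> ultra_plus r p"
  proof
    fix A assume "A \<in> p"
    show "A \<in> ultra_plus r p"
      unfolding mem_ultra_plus
    proof (rule ccontr)
      assume "{n. set_shift A n \<in> p} \<notin> r"
      then have "- {n. set_shift A n \<in> p} \<in> r"
        using ultrafilter_Compl_iff[OF r(1)] by blast
      then obtain q where q: "q \<in> M" "ultra_plus q p = p" "- {n. set_shift A n \<in> p} \<in> q"
        using r(2) by blast
      then have "A \<notin> ultra_plus q p"
        unfolding mem_ultra_plus using ultrafilter_Compl_iff[OF stone_closed_ultrafilter[OF M q(1)]] by blast
      then show False
        using \<open>A \<in> p\<close> q(2) by simp
    qed
  qed
  then have "p = ultra_plus r p"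
    by (rule ultrafilter_subset_imp_eq[OF p ultrafilter_ultra_plus[OF r(1) p]])
  then show "r \<in> {q\<in>M. ultra_plus q p = p}"
    using \<open>r \<in> M\<close> by simp
qed

text \<open>Ellis-Numakura: for \<open>p\<close> in a minimal closed semigroup \<open>M\<close>, both \<open>M + p\<close> and the stabilizer
  of \<open>p\<close> in \<open>M\<close> are closed subsemigroups of \<open>M\<close>, hence equal to \<open>M\<close>; so \<open>p + p = p\<close>.\<close>

theorem idempotent_free_ultrafilter:
  obtains p where "p \<in> free_ultrafilters" "ultra_plus p p = p"
proof -
  obtain M where M: "closed_free_semigroup M"
    and minimal: "\<And>K. closed_free_semigroup K \<Longrightarrow> K \<subseteq> M \<Longrightarrow> K = M"
    using minimal_closed_free_semigroup by blast
  have closed: "stone_closed M" and "M \<noteq> {}" and free: "M \<subseteq> free_ultrafilters"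
    and plus: "\<And>q q'. q \<in> M \<Longrightarrow> q' \<in> M \<Longrightarrow> ultra_plus q q' \<in> M"
    using M unfolding closed_free_semigroup_def plus_closed_def by blast+
  then obtain p where "p \<in> M"
    by blast
  have p: "ultrafilter p"
    using stone_closed_ultrafilter[OF closed \<open>p \<in> M\<close>] .
  let ?Mp = "(\<lambda>q. ultra_plus q p) ` M"
  have "?Mp \<subseteq> M"
    using plus \<open>p \<in> M\<close> by blast
  moreover have "plus_closed ?Mp"
    unfolding plus_closed_def
  proof (intro ballI)
    fix x y assume "x \<in> ?Mp" "y \<in> ?Mp"
    then obtain q q' where "q \<in> M" "q' \<in> M" "x = ultra_plus q p" "y = ultra_plus q' p"
      by blast
    then have "ultra_plus x y = ultra_plus (ultra_plus (ultra_plus q p) q') p"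
      by (simp add: ultra_plus_assoc)
    moreover have "ultra_plus (ultra_plus q p) q' \<in> M"
      using plus \<open>q \<in> M\<close> \<open>q' \<in> M\<close> \<open>p \<in> M\<close> by blast
    ultimately show "ultra_plus x y \<in> ?Mp"
      by blast
  qed
  ultimately have "closed_free_semigroup ?Mp"
    unfolding closed_free_semigroup_def
    using stone_closed_right_translate[OF closed p] free \<open>M \<noteq> {}\<close> by blast
  then have "?Mp = M"
    using minimal \<open>?Mp \<subseteq> M\<close> by blast
  then obtain q where "q \<in> M" "ultra_plus q p = p"
    using \<open>p \<in> M\<close> by (metis imageE)
  let ?K = "{q\<in>M. ultra_plus q p = p}"
  have "plus_closed ?K"
    unfolding plus_closed_def using plus by (simp add: ultra_plus_assoc)
  then have "closed_free_semigroup ?K"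
    unfolding closed_free_semigroup_def
    using stone_closed_right_stabilizer[OF closed p] free \<open>q \<in> M\<close> \<open>ultra_plus q p = p\<close> by blast
  then have "?K = M"
    using minimal by blast
  then show thesis
    using that \<open>p \<in> M\<close> free by blast
qed

section \<open>Hindman's theorem\<close>

definition shift_stable :: "nat set set \<Rightarrow> nat set \<Rightarrow> bool" where
  "shift_stable p B \<longleftrightarrow> B \<in> p \<and> (\<forall>n\<in>B. set_shift B n \<in> p)"

lemma shift_stable_idempotent:
  assumes p: "ultrafilter p" "ultra_plus p p = p" and "A \<in> p"
  shows "shift_stable p {n\<in>A. set_shift A n \<in> p}"
proof -
  have shifts_in_p: "{n. set_shift A' n \<in> p} \<in> p" if "A' \<in> p" for A'
    using that p(2) mem_ultra_plus[of A' p p] by simp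
  have "{n\<in>A. set_shift A n \<in> p} = A \<inter> {n. set_shift A n \<in> p}"
    by blast
  then have "{n\<in>A. set_shift A n \<in> p} \<in> p"
    using ultrafilter_Int[OF p(1) \<open>A \<in> p\<close> shifts_in_p[OF \<open>A \<in> p\<close>]] by simp
  moreover have "set_shift {n\<in>A. set_shift A n \<in> p} n \<in> p" if "set_shift A n \<in> p" for n
  proof -
    have "{m. set_shift A (m + n) \<in> p} \<in> p"
      using shifts_in_p[OF that] by (simp add: set_shift_set_shift)
    moreover have "set_shift {n\<in>A. set_shift A n \<in> p} n = set_shift A n \<inter> {m. set_shift A (m + n) \<in> p}"
      by (auto simp: set_shift_def)
    ultimately show ?thesis
      using ultrafilter_Int[OF p(1) that] by simp
  qed
  ultimately show ?thesis
    unfolding shift_stable_def by blast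
qed

lemma shift_stable_Int_set_shift:
  assumes p: "ultrafilter p" and B: "shift_stable p B" and "n \<in> B"
  shows "shift_stable p (B \<inter> set_shift B n)"
proof -
  have "B \<in> p" "set_shift B n \<in> p"
    using B \<open>n \<in> B\<close> unfolding shift_stable_def by blast+
  then have "B \<inter> set_shift B n \<in> p"
    by (rule ultrafilter_Int[OF p])
  moreover have "set_shift (B \<inter> set_shift B n) m \<in> p" if "m \<in> B \<inter> set_shift B n" for m
  proof -
    have "set_shift B m \<in> p" "set_shift B (m + n) \<in> p"
      using B that unfolding shift_stable_def set_shift_def by auto
    moreover have "set_shift (B \<inter> set_shift B n) m = set_shift B m \<inter> set_shift B (m + n)"
      by (auto simp: set_shift_def add.assoc)
    ultimately show ?thesis
      using ultrafilter_Int[OF p] by simp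
  qed
  ultimately show ?thesis
    unfolding shift_stable_def by blast
qed

lemma shift_stable_positive_member:
  assumes "p \<in> free_ultrafilters" "shift_stable p B"
  obtains n where "n \<in> B" "1 \<le> n"
proof -
  have p: "ultrafilter p" "{1..} \<in> p"
    using assms(1) unfolding free_ultrafilters_def by blast+
  have "B \<in> p"
    using assms(2) unfolding shift_stable_def by blast
  then have "B \<inter> {1..} \<noteq> {}"
    using ultrafilter_Int[OF p(1) _ p(2)] ultrafilter_empty[OF p(1)] by metis
  then show thesis
    using that by auto
qed

lemma finite_sums_in_decreasing_chain:
  fixes x :: "nat \<Rightarrow> nat"
  assumes "\<And>n. x n \<in> B n" and "\<And>n. B (Suc n) \<subseteq> B n \<inter> set_shift (B n) (x n)"
    and "finite F" "F \<noteq> {}"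
  shows "sum x F \<in> B (Min F)"
  using assms(3,4)
proof (induction F rule: finite_linorder_min_induct)
  case (insert b F)
  show ?case
  proof (cases "F = {}")
    case False
    have "Suc b \<le> Min F"
      using insert.hyps(1,2) False by (simp add: Suc_le_eq)
    then have "B (Min F) \<subseteq> B (Suc b)"
      by (rule lift_Suc_antimono_le[of B, rotated]) (use assms(2) in blast)
    moreover have "B (Suc b) \<subseteq> set_shift (B b) (x b)"
      using assms(2) by blast
    ultimately have "B (Min F) \<subseteq> set_shift (B b) (x b)"
      by blast
    then have "sum x F \<in> set_shift (B b) (x b)"
      using insert.IH[OF False] by blast
    moreover have "Min (insert b F) = b"
      using insert.hyps False by (auto intro: Min_insert2 less_imp_le)
    moreover have "b \<notin> F"
      using insert.hyps(2) by blast
    ultimately show ?thesis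
      using insert.hyps(1) by (simp add: set_shift_def add.commute)
  qed (simp add: assms(1))
qed simp

lemma finite_sums_in_shift_stable:
  assumes p: "p \<in> free_ultrafilters" and B: "shift_stable p B"
  obtains x :: "nat \<Rightarrow> nat" where "\<And>i. 1 \<le> x i" "\<And>F. finite F \<Longrightarrow> F \<noteq> {} \<Longrightarrow> sum x F \<in> B"
proof -
  have "ultrafilter p"
    using p unfolding free_ultrafilters_def by blast
  define P where "P n s \<longleftrightarrow> shift_stable p (snd s) \<and> fst s \<in> snd s \<and> 1 \<le> fst s \<and> snd s \<subseteq> B"
    for n :: nat and s :: "nat \<times> nat set"
  define Q where "Q n s s' \<longleftrightarrow> snd s' \<subseteq> snd s \<inter> set_shift (snd s) (fst s)"
    for n :: nat and s s' :: "nat \<times> nat set"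
  have "\<exists>s. P 0 s"
  proof -
    obtain y where "y \<in> B" "1 \<le> y"
      by (rule shift_stable_positive_member[OF p B])
    then have "P 0 (y, B)"
      unfolding P_def using B by simp
    then show ?thesis ..
  qed
  moreover have "\<exists>s'. P (Suc n) s' \<and> Q n s s'" if "P n s" for n s
  proof -
    let ?C = "snd s \<inter> set_shift (snd s) (fst s)"
    have stable: "shift_stable p ?C"
      using shift_stable_Int_set_shift[OF \<open>ultrafilter p\<close>] that unfolding P_def by blast
    then obtain y where "y \<in> ?C" "1 \<le> y"
      by (rule shift_stable_positive_member[OF p])
    then have "P (Suc n) (y, ?C) \<and> Q n s (y, ?C)"
      using stable that unfolding P_def Q_def by auto
    then show ?thesis ..
  qed
  ultimately obtain f where f: "\<And>n. P n (f n)" "\<And>n. Q n (f n) (f (Suc n))"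
    using dependent_nat_choice[of P Q] by metis
  define x where "x n = fst (f n)" for n
  have "sum x F \<in> B" if "finite F" "F \<noteq> {}" for F
  proof -
    have "sum x F \<in> snd (f (Min F))"
    proof (rule finite_sums_in_decreasing_chain[OF _ _ that])
      show "x n \<in> snd (f n)" for n
        using f(1)[of n] unfolding P_def x_def by blast
      show "snd (f (Suc n)) \<subseteq> snd (f n) \<inter> set_shift (snd (f n)) (x n)" for n
        using f(2)[of n] unfolding Q_def x_def .
    qed
    then show ?thesis
      using f(1)[of "Min F"] unfolding P_def by blast
  qed
  moreover have "1 \<le> x i" for i
    using f(1)[of i] unfolding P_def x_def by blast
  ultimately show thesis
    using that by blast
qed

theorem hindman:
  fixes c :: "nat \<Rightarrow> 'b"
  assumes "finite (range c)"
  obtains x :: "nat \<Rightarrow> nat" and v where "\<And>i. 1 \<le> x i"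
    "\<And>F. finite F \<Longrightarrow> F \<noteq> {} \<Longrightarrow> c (sum x F) = v"
proof -
  obtain p where p: "p \<in> free_ultrafilters" "ultra_plus p p = p"
    by (rule idempotent_free_ultrafilter)
  then have "ultrafilter p"
    unfolding free_ultrafilters_def by blast
  have "\<exists>A\<in>(\<lambda>v. c -` {v}) ` range c. A \<in> p"
    by (rule ultrafilter_finite_cover[OF \<open>ultrafilter p\<close>]) (use assms in auto)
  then obtain v where "c -` {v} \<in> p"
    by blast
  then have "shift_stable p {n \<in> c -` {v}. set_shift (c -` {v}) n \<in> p}"
    by (rule shift_stable_idempotent[OF \<open>ultrafilter p\<close> p(2)])
  then obtain x :: "nat \<Rightarrow> nat" where x: "\<And>i. 1 \<le> x i"
    "\<And>F. finite F \<Longrightarrow> F \<noteq> {} \<Longrightarrow> sum x F \<in> {n \<in> c -` {v}. set_shift (c -` {v}) n \<in> p}"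
    using finite_sums_in_shift_stable[OF p(1)] by blast
  show thesis
  proof (rule that)
    show "1 \<le> x i" for i
      by (rule x(1))
    show "c (sum x F) = v" if "finite F" "F \<noteq> {}" for F
      using x(2)[OF that] by simp
  qed
qed

section \<open>Powers of a periodic word\<close>

lemma length_concat_replicate [simp]: "length (concat (replicate n w)) = n * length w"
  by (induction n) auto

lemma nth_concat_replicate:
  "k < n * length w \<Longrightarrow> concat (replicate n w) ! k = w ! (k mod length w)"
proof (induction n arbitrary: k)
  case (Suc n)
  show ?case
  proof (cases "k < length w")
    case False
    then have "concat (replicate n w) ! (k - length w) = w ! ((k - length w) mod length w)"
      using Suc by auto
    then show ?thesis
      using False by (simp add: nth_append le_mod_geq)
  qed (simp add: nth_append)
qed simp

lemma concat_map_concat_replicate: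
  "concat (map (\<lambda>i. concat (replicate (x i) w)) ms) = concat (replicate (sum_list (map x ms)) w)"
  by (induction ms) (auto simp: replicate_add)

lemma concat_replicate_plus_words:
  assumes "w \<in> plus_words A" "1 \<le> n"
  shows "concat (replicate n w) \<in> plus_words A"
  using assms by (cases n) (auto simp: plus_words_def)

lemma rotate_plus_words: "w \<in> plus_words A \<Longrightarrow> rotate r w \<in> plus_words A"
  by (simp add: plus_words_def)

text \<open>All blocks are powers of one word, so a product of blocks depends only on the
  set of indices, through the sum of the exponents.\<close>

lemma ultra_mono_powers:
  assumes "\<And>F. finite F \<Longrightarrow> F \<noteq> {} \<Longrightarrow> \<phi> (concat (replicate (sum x F) w)) = c" and "c \<in> C"
  shows "ultra_mono \<phi> C (\<lambda>i. concat (replicate (x i) w))"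
  unfolding ultra_mono_def
proof (rule bexI[OF _ \<open>c \<in> C\<close>], intro allI impI)
  fix ns ms :: "nat list"
  assume ns: "ns \<noteq> []" "sorted_wrt (<) ns" and ms: "mset ms = mset ns"
  have "distinct ms"
    using ns(2) ms strict_sorted_iff mset_eq_imp_distinct_iff by metis
  moreover have "set ms \<noteq> {}"
    using ns(1) ms by (metis set_mset_mset set_empty)
  ultimately show "\<phi> (concat (map (\<lambda>i. concat (replicate (x i) w)) ms)) = c"
    using assms(1)[of "set ms"]
    by (simp add: concat_map_concat_replicate sum_list_distinct_conv_sum_set)
qed

lemma is_factorization_powers:
  assumes "u \<in> plus_words A" "\<And>i. 1 \<le> x i"
  shows "is_factorization A (omega_pow u) (\<lambda>i. concat (replicate (x i) u))"
  unfolding is_factorization_def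
proof (intro conjI allI impI)
  show "concat (replicate (x i) u) \<in> plus_words A" for i
    using concat_replicate_plus_words[OF assms(1,2)] .
next
  fix i k
  assume "k < length (concat (replicate (x i) u))"
  moreover have "starts (\<lambda>i. concat (replicate (x i) u)) i = length u * sum x {..<i}"
    by (simp add: starts_def sum_distrib_left mult.commute)
  ultimately show "omega_pow u (starts (\<lambda>i. concat (replicate (x i) u)) i + k) =
      concat (replicate (x i) u) ! k"
    by (simp add: omega_pow_def nth_concat_replicate)
qed

lemma induced_fact_powers:
  assumes "u \<noteq> []"
  shows "induced_fact (\<lambda>i. concat (replicate (x i) u)) j (omega_pow u) =
    (\<lambda>i. concat (replicate (x i) (rotate j u)))"
proof (intro ext nth_equalityI)
  fix i k
  let ?V = "\<lambda>i. concat (replicate (x i) u)"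
  assume "k < length (induced_fact ?V j (omega_pow u) i)"
  then have k: "k < x i * length u"
    by (simp add: induced_fact_def)
  have "starts ?V i + k + j = k + j + length u * sum x {..<i}"
    by (simp add: starts_def sum_distrib_left mult.commute)
  moreover have "induced_fact ?V j (omega_pow u) i ! k = omega_pow u (starts ?V i + k + j)"
    using k by (simp add: induced_fact_def shift_def)
  ultimately have "induced_fact ?V j (omega_pow u) i ! k = u ! ((k + j) mod length u)"
    by (simp only: omega_pow_def mod_mult_self2)
  also have "\<dots> = rotate j u ! (k mod length u)"
    using assms by (simp add: nth_rotate mod_add_right_eq add.commute)
  also have "\<dots> = concat (replicate (x i) (rotate j u)) ! k"
    using k by (simp add: nth_concat_replicate)
  finally show "induced_fact ?V j (omega_pow u) i ! k = concat (replicate (x i) (rotate j u)) ! k" .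
qed (simp add: induced_fact_def)

definition rotation_colours :: "('a list \<Rightarrow> 'c) \<Rightarrow> 'a list \<Rightarrow> nat \<Rightarrow> 'c list" where
  "rotation_colours \<phi> u n = map (\<lambda>r. \<phi> (concat (replicate n (rotate r u)))) [0..<length u]"

lemma finite_range_rotation_colours:
  assumes "finite C" "\<forall>w\<in>plus_words A. \<phi> w \<in> C" "u \<in> plus_words A"
  shows "finite (range (rotation_colours \<phi> u))"
proof -
  let ?lists = "{cs. set cs \<subseteq> C \<and> length cs = length u}"
  have Suc: "rotation_colours \<phi> u (Suc n) \<in> ?lists" for n
    using assms(2) concat_replicate_plus_words[OF rotate_plus_words[OF assms(3)], of "Suc n"]
    by (auto simp: rotation_colours_def simp del: replicate_Suc)
  have "range (rotation_colours \<phi> u) \<subseteq> insert (rotation_colours \<phi> u 0) ?lists"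
  proof (rule image_subsetI)
    show "rotation_colours \<phi> u n \<in> insert (rotation_colours \<phi> u 0) ?lists" for n
      using Suc by (cases n) blast+
  qed
  then show ?thesis
    by (rule finite_subset) (simp add: finite_lists_length_eq[OF assms(1)])
qed

lemma ultra_mono_rotated_powers:
  assumes "\<forall>w\<in>plus_words A. \<phi> w \<in> C" "u \<in> plus_words A" "\<And>i. 1 \<le> x i"
    and "\<And>F. finite F \<Longrightarrow> F \<noteq> {} \<Longrightarrow> rotation_colours \<phi> u (sum x F) = v"
  shows "ultra_mono \<phi> C (\<lambda>i. concat (replicate (x i) (rotate j u)))"
proof (rule ultra_mono_powers)
  let ?r = "j mod length u"
  have "?r < length u"
    using assms(2) by (simp add: plus_words_def)
  then show "\<phi> (concat (replicate (sum x F) (rotate j u))) = v ! ?r" if "finite F" "F \<noteq> {}" for F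
    using assms(4)[OF that] by (auto simp: rotation_colours_def rotate_conv_mod[of j u])
  show "v ! ?r \<in> C"
    using \<open>?r < length u\<close> assms(4)[of "{0}"] assms(1,2,3)
    by (auto simp: rotation_colours_def concat_replicate_plus_words rotate_plus_words rotate_conv_mod[of j u])
qed

theorem theorem3p5:
  fixes A :: "'a set" and C :: "'c set" and \<phi> :: "'a list \<Rightarrow> 'c" and u :: "'a list"
  assumes "A \<noteq> {}"
    and "finite C"
    and "\<forall>w\<in>plus_words A. \<phi> w \<in> C"
    and "u \<in> plus_words A"
  shows "\<exists>V. is_factorization A (omega_pow u) V \<and> ultra_mono \<phi> C V
             \<and> shift_invariant \<phi> C (omega_pow u) V"
proof -
  obtain x :: "nat \<Rightarrow> nat" and v where x: "\<And>i. 1 \<le> x i"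
    and v: "\<And>F. finite F \<Longrightarrow> F \<noteq> {} \<Longrightarrow> rotation_colours \<phi> u (sum x F) = v"
    using hindman[OF finite_range_rotation_colours[OF assms(2-4)]] by blast
  have mono: "ultra_mono \<phi> C (\<lambda>i. concat (replicate (x i) (rotate j u)))" for j
    using ultra_mono_rotated_powers[OF assms(3,4) x v] .
  have "u \<noteq> []"
    using assms(4) by (simp add: plus_words_def)
  then have "shift_invariant \<phi> C (omega_pow u) (\<lambda>i. concat (replicate (x i) u))"
    unfolding shift_invariant_def induced_fact_powers[OF \<open>u \<noteq> []\<close>] using mono by blast
  then show ?thesis
    using is_factorization_powers[of u A x, OF assms(4) x] mono[of 0] by auto
qed

end
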